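(* Let $P$ be a poset with an $\mathbb{R}$-action $\Lambda$, and let $V,W$ be interval-decomposable pfd $P$-persistence modules. If, for some $\epsilon\ge0$, there exists a $\Lambda_\epsilon$-matching between $\mathscr{B}(V)$ and $\mathscr{B}(W)$, then this same partial matching is a bottleneck $\Lambda_\epsilon$-interleaving between $V$ and $W$. Consequently, $$d^\Lambda_{\mathrm{BI}}(V,W)\le d^\Lambda_{\mathrm B}(\mathscr{B}(V),\mathscr{B}(W)).$$
   Context: Let $k$ be a field. A $P$-persistence module is a functor from the poset $P$ (as a category) to $k$-vector spaces; it is pfd if every space is finite-dimensional. An interval of $P$ is a nonempty convex and connected subset (convex: $p,q\in I$, $p\le r\le q$ imply $r\in I$; connected: any two elements are joined by a finite sequence in $I$ with consecutive ones comparable). The interval module $k_I$ is $k$ on $I$ and $0$ elsewhere, with identity maps within $I$ and zero maps otherwise. Every pfd module decomposes uniquely (up to isomorphism and permutation) into indecomposables; $\mathscr{B}(V)$ is the multiset of these summands. $V$ is interval-decomposable if all summands are interval modules; $\mathscr{B}(V)$ is then identified with a multiset of intervals. An $\mathbb{R}$-action on $P$ is a family $\{\Lambda_\epsilon\}_{\epsilon\ge0}$ of poset automorphisms with $p\le\Lambda_\epsilon(p)$, $\Lambda_0=\mathrm{id}$ and $\Lambda_\epsilon\Lambda_\zeta=\Lambda_{\epsilon+\zeta}$. Shifts and interleavings: - $V(\epsilon)_p=V_{\Lambda_\epsilon p}$ and $V(\epsilon)(p,q)=V(\Lambda_\epsilon p,\Lambda_\epsilon q)$; for a morphism $\phi$,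 $\phi(\epsilon)$ has components $\phi_{\Lambda_\epsilon p}$; - $V_{0\to\epsilon}\colon V\to V(\epsilon)$ has components $V(p,\Lambda_\epsilon p)$; - a $\Lambda_\epsilon$-interleaving is a pair $\alpha\colon V\to W(\epsilon)$, $\beta\colon W\to V(\epsilon)$ with $\beta(\epsilon)\alpha=V_{0\to2\epsilon}$ and $\alpha(\epsilon)\beta=W_{0\to2\epsilon}$; - $V$ is $\Lambda_\epsilon$-trivial if $V_{0\to\epsilon}=0$. For $A\subseteq P$ nonempty, $A^\uparrow=\{p:\exists a\in A,\ a\le p\}$ and $A^\downarrow=\{p:\exists a\in A,\ p\le a\}$; $\emptyset^\uparrow=\emptyset^\downarrow=P$. Set $\mathrm{Ex}^\Lambda_\epsilon(A)=\Lambda_\epsilon^{-1}(A)^\uparrow\cap\Lambda_\epsilon(A)^\downarrow$, with $\Lambda_\epsilon^{-1}(A)$ the preimage. A $\Lambda_\epsilon$-matching between multisets of intervals $\mathscr{A},\mathscr{C}$ is a bijection $\sigma$ between submultisets such that: - every unmatched interval $I$ has $k_I$ $\Lambda_{2\epsilon}$-trivial; - $\sigma(I)=J$ implies $I\subseteq\mathrm{Ex}^\Lambda_\epsilon(J)$ and $J\subseteq\mathrm{Ex}^\Lambda_\epsilon(I)$. A bottleneck $\Lambda_\epsilon$-interleaving between $V$ and $W$ is a bijection $\sigma$ between submultisets of $\mathscr{B}(V)$ and $\mathscr{B}(W)$ such that: - all unmatched summands are $\Lambda_{2\epsilon}$-trivial; - each $M$ and $\sigma(M)$ are $\Lambda_\epsilon$-interleaved.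 $d^\Lambda_{\mathrm{BI}}$ and $d^\Lambda_{\mathrm B}$ are the infima of $\epsilon\ge0$ admitting a bottleneck $\Lambda_\epsilon$-interleaving, resp. a $\Lambda_\epsilon$-matching ($\inf\emptyset=+\infty$). *)

theory Defs
  imports "Jordan_Normal_Form.Matrix" "HOL-Library.Extended_Real"
begin

text \<open>Pfd persistence modules over a poset 'p with coefficients in a field 'k,
  represented concretely: the space at p is 'k^(pdim p) and the structure map
  V(p,q) for p \<le> q is a (pdim q) x (pdim p) matrix.\<close>

record ('p, 'k) pmod =
  pdim :: "'p \<Rightarrow> nat"
  pmap :: "'p \<Rightarrow> 'p \<Rightarrow> 'k mat"

definition is_pmod :: "('p::order, 'k::field) pmod \<Rightarrow> bool" where
  "is_pmod V \<longleftrightarrow>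
     (\<forall>p q. p \<le> q \<longrightarrow> pmap V p q \<in> carrier_mat (pdim V q) (pdim V p)) \<and>
     (\<forall>p. pmap V p p = 1\<^sub>m (pdim V p)) \<and>
     (\<forall>p q r. p \<le> q \<and> q \<le> r \<longrightarrow> pmap V q r * pmap V p q = pmap V p r)"

definition is_morph :: "('p::order, 'k::field) pmod \<Rightarrow> ('p, 'k) pmod \<Rightarrow> ('p \<Rightarrow> 'k mat) \<Rightarrow> bool" where
  "is_morph V W \<phi> \<longleftrightarrow>
     (\<forall>p. \<phi> p \<in> carrier_mat (pdim W p) (pdim V p)) \<and>
     (\<forall>p q. p \<le> q \<longrightarrow> pmap W p q * \<phi> p = \<phi> q * pmap V p q)"

definition nonzero_pmod :: "('p, 'k) pmod \<Rightarrow> bool" where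
  "nonzero_pmod V \<longleftrightarrow> (\<exists>p. pdim V p \<noteq> 0)"

definition is_decomp ::
  "('p::order, 'k::field) pmod \<Rightarrow> 'i set \<Rightarrow> ('i \<Rightarrow> ('p, 'k) pmod)
     \<Rightarrow> ('i \<Rightarrow> 'p \<Rightarrow> 'k mat) \<Rightarrow> ('i \<Rightarrow> 'p \<Rightarrow> 'k mat) \<Rightarrow> bool" where
  "is_decomp V X M \<iota> \<pi> \<longleftrightarrow>
     (\<forall>x\<in>X. is_pmod (M x) \<and> is_morph (M x) V (\<iota> x) \<and> is_morph V (M x) (\<pi> x)) \<and>
     (\<forall>x\<in>X. \<forall>y\<in>X. \<forall>p. \<pi> x p * \<iota> y p =
        (if x = y then 1\<^sub>m (pdim (M x) p) else 0\<^sub>m (pdim (M x) p) (pdim (M y) p))) \<and>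
     (\<forall>p. finite {x\<in>X. pdim (M x) p \<noteq> 0} \<and>
        (\<forall>i < pdim V p. \<forall>j < pdim V p.
           (\<Sum>x\<in>{x\<in>X. pdim (M x) p \<noteq> 0}. (\<iota> x p * \<pi> x p) $$ (i, j)) = (1\<^sub>m (pdim V p)) $$ (i, j)))"

definition indecomposable :: "('p::order, 'k::field) pmod \<Rightarrow> bool" where
  "indecomposable M \<longleftrightarrow> is_pmod M \<and> nonzero_pmod M \<and>
     \<not> (\<exists>(N :: bool \<Rightarrow> ('p, 'k) pmod) \<iota> \<pi>. is_decomp M UNIV N \<iota> \<pi> \<and> (\<forall>b. nonzero_pmod (N b)))"

definition indec_decomp ::
  "('p::order, 'k::field) pmod \<Rightarrow> 'i set \<Rightarrow> ('i \<Rightarrow> ('p, 'k) pmod)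
     \<Rightarrow> ('i \<Rightarrow> 'p \<Rightarrow> 'k mat) \<Rightarrow> ('i \<Rightarrow> 'p \<Rightarrow> 'k mat) \<Rightarrow> bool" where
  "indec_decomp V X M \<iota> \<pi> \<longleftrightarrow> is_decomp V X M \<iota> \<pi> \<and> (\<forall>x\<in>X. indecomposable (M x))"

definition is_interval :: "'p::order set \<Rightarrow> bool" where
  "is_interval I \<longleftrightarrow> I \<noteq> {} \<and>
     (\<forall>p\<in>I. \<forall>q\<in>I. \<forall>r. p \<le> r \<and> r \<le> q \<longrightarrow> r \<in> I) \<and>
     (\<forall>p\<in>I. \<forall>q\<in>I. (\<lambda>x y. x \<in> I \<and> y \<in> I \<and> (x \<le> y \<or> y \<le> x))\<^sup>*\<^sup>* p q)"

definition kI :: "'p::order set \<Rightarrow> ('p, 'k::field) pmod" where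
  "kI I = \<lparr> pdim = (\<lambda>p. if p \<in> I then 1 else 0),
            pmap = (\<lambda>p q. if p \<in> I \<and> q \<in> I then 1\<^sub>m 1
                          else 0\<^sub>m (if q \<in> I then 1 else 0) (if p \<in> I then 1 else 0)) \<rparr>"

definition interval_decomp ::
  "('p::order, 'k::field) pmod \<Rightarrow> 'i set \<Rightarrow> ('i \<Rightarrow> 'p set)
     \<Rightarrow> ('i \<Rightarrow> 'p \<Rightarrow> 'k mat) \<Rightarrow> ('i \<Rightarrow> 'p \<Rightarrow> 'k mat) \<Rightarrow> bool" where
  "interval_decomp V X I \<iota> \<pi> \<longleftrightarrow> (\<forall>x\<in>X. is_interval (I x)) \<and> is_decomp V X (\<lambda>x. kI (I x)) \<iota> \<pi>"

definition R_action :: "(real \<Rightarrow> 'p::order \<Rightarrow> 'p) \<Rightarrow> bool" where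
  "R_action \<Lambda> \<longleftrightarrow>
     (\<forall>\<epsilon>\<ge>0. bij (\<Lambda> \<epsilon>) \<and> (\<forall>p q. \<Lambda> \<epsilon> p \<le> \<Lambda> \<epsilon> q \<longleftrightarrow> p \<le> q) \<and> (\<forall>p. p \<le> \<Lambda> \<epsilon> p)) \<and>
     \<Lambda> 0 = id \<and>
     (\<forall>\<epsilon>\<ge>0. \<forall>\<zeta>\<ge>0. \<Lambda> \<epsilon> \<circ> \<Lambda> \<zeta> = \<Lambda> (\<epsilon> + \<zeta>))"

definition shift :: "(real \<Rightarrow> 'p \<Rightarrow> 'p) \<Rightarrow> real \<Rightarrow> ('p, 'k) pmod \<Rightarrow> ('p, 'k) pmod" where
  "shift \<Lambda> \<epsilon> V = \<lparr> pdim = (\<lambda>p. pdim V (\<Lambda> \<epsilon> p)), pmap = (\<lambda>p q. pmap V (\<Lambda> \<epsilon> p) (\<Lambda> \<epsilon> q)) \<rparr>"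

definition transl :: "(real \<Rightarrow> 'p \<Rightarrow> 'p) \<Rightarrow> real \<Rightarrow> ('p, 'k) pmod \<Rightarrow> 'p \<Rightarrow> 'k mat" where
  "transl \<Lambda> \<epsilon> V = (\<lambda>p. pmap V p (\<Lambda> \<epsilon> p))"

definition interleaved :: "(real \<Rightarrow> 'p::order \<Rightarrow> 'p) \<Rightarrow> real \<Rightarrow> ('p, 'k::field) pmod \<Rightarrow> ('p, 'k) pmod \<Rightarrow> bool" where
  "interleaved \<Lambda> \<epsilon> V W \<longleftrightarrow>
     (\<exists>\<alpha> \<beta>. is_morph V (shift \<Lambda> \<epsilon> W) \<alpha> \<and> is_morph W (shift \<Lambda> \<epsilon> V) \<beta> \<and>
        (\<forall>p. \<beta> (\<Lambda> \<epsilon> p) * \<alpha> p = transl \<Lambda> (2 * \<epsilon>) V p) \<and>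
        (\<forall>p. \<alpha> (\<Lambda> \<epsilon> p) * \<beta> p = transl \<Lambda> (2 * \<epsilon>) W p))"

definition trivial :: "(real \<Rightarrow> 'p \<Rightarrow> 'p) \<Rightarrow> real \<Rightarrow> ('p, 'k::zero) pmod \<Rightarrow> bool" where
  "trivial \<Lambda> \<epsilon> V \<longleftrightarrow> (\<forall>p. transl \<Lambda> \<epsilon> V p = 0\<^sub>m (pdim V (\<Lambda> \<epsilon> p)) (pdim V p))"

definition upset :: "'p::order set \<Rightarrow> 'p set" where
  "upset A = (if A = {} then UNIV else {p. \<exists>a\<in>A. a \<le> p})"

definition downset :: "'p::order set \<Rightarrow> 'p set" where
  "downset A = (if A = {} then UNIV else {p. \<exists>a\<in>A. p \<le> a})"

definition Ex_set :: "(real \<Rightarrow> 'p::order \<Rightarrow> 'p) \<Rightarrow> real \<Rightarrow> 'p set \<Rightarrow> 'p set" where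
  "Ex_set \<Lambda> \<epsilon> A = upset (\<Lambda> \<epsilon> -` A) \<inter> downset (\<Lambda> \<epsilon> ` A)"

text \<open>Multisets of intervals are represented as indexed families (X, I); a bijection between
  submultisets is a bijection between subsets of the index sets.\<close>
definition Lmatching ::
  "(real \<Rightarrow> 'p::order \<Rightarrow> 'p) \<Rightarrow> real \<Rightarrow> 'i set \<Rightarrow> ('i \<Rightarrow> 'p set) \<Rightarrow> 'j set \<Rightarrow> ('j \<Rightarrow> 'p set)
     \<Rightarrow> 'i set \<Rightarrow> 'j set \<Rightarrow> ('i \<Rightarrow> 'j) \<Rightarrow> 'k::field itself \<Rightarrow> bool" where
  "Lmatching \<Lambda> \<epsilon> X I Y J X0 Y0 \<sigma> _ \<longleftrightarrow>
     X0 \<subseteq> X \<and> Y0 \<subseteq> Y \<and> bij_betw \<sigma> X0 Y0 \<and>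
     (\<forall>x\<in>X - X0. trivial \<Lambda> (2 * \<epsilon>) (kI (I x) :: ('p, 'k) pmod)) \<and>
     (\<forall>y\<in>Y - Y0. trivial \<Lambda> (2 * \<epsilon>) (kI (J y) :: ('p, 'k) pmod)) \<and>
     (\<forall>x\<in>X0. I x \<subseteq> Ex_set \<Lambda> \<epsilon> (J (\<sigma> x)) \<and> J (\<sigma> x) \<subseteq> Ex_set \<Lambda> \<epsilon> (I x))"

definition bottleneck_interleaving ::
  "(real \<Rightarrow> 'p::order \<Rightarrow> 'p) \<Rightarrow> real \<Rightarrow> ('p, 'k::field) pmod \<Rightarrow> ('p, 'k) pmod
     \<Rightarrow> 'i set \<Rightarrow> ('i \<Rightarrow> ('p, 'k) pmod) \<Rightarrow> ('i \<Rightarrow> 'p \<Rightarrow> 'k mat) \<Rightarrow> ('i \<Rightarrow> 'p \<Rightarrow> 'k mat)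
     \<Rightarrow> 'j set \<Rightarrow> ('j \<Rightarrow> ('p, 'k) pmod) \<Rightarrow> ('j \<Rightarrow> 'p \<Rightarrow> 'k mat) \<Rightarrow> ('j \<Rightarrow> 'p \<Rightarrow> 'k mat)
     \<Rightarrow> 'i set \<Rightarrow> 'j set \<Rightarrow> ('i \<Rightarrow> 'j) \<Rightarrow> bool" where
  "bottleneck_interleaving \<Lambda> \<epsilon> V W X M \<iota>V \<pi>V Y N \<iota>W \<pi>W X0 Y0 \<sigma> \<longleftrightarrow>
     indec_decomp V X M \<iota>V \<pi>V \<and> indec_decomp W Y N \<iota>W \<pi>W \<and>
     X0 \<subseteq> X \<and> Y0 \<subseteq> Y \<and> bij_betw \<sigma> X0 Y0 \<and>
     (\<forall>x\<in>X - X0. trivial \<Lambda> (2 * \<epsilon>) (M x)) \<and>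
     (\<forall>y\<in>Y - Y0. trivial \<Lambda> (2 * \<epsilon>) (N y)) \<and>
     (\<forall>x\<in>X0. interleaved \<Lambda> \<epsilon> (M x) (N (\<sigma> x)))"

text \<open>Distances (inf of the empty set is \<infinity>). For d_BI the barcodes B(V), B(W) are represented by
  any decomposition into indecomposables indexed by a subset of 'p \<times> nat (enough room, as
  each summand is nonzero at some point p and only finitely many summands are nonzero at p).\<close>
definition dBI :: "(real \<Rightarrow> 'p::order \<Rightarrow> 'p) \<Rightarrow> ('p, 'k::field) pmod \<Rightarrow> ('p, 'k) pmod \<Rightarrow> ereal" where
  "dBI \<Lambda> V W = Inf {ereal \<epsilon> | \<epsilon>. \<epsilon> \<ge> 0 \<and>
     (\<exists>(X :: ('p \<times> nat) set) M \<iota>V \<pi>V (Y :: ('p \<times> nat) set) N \<iota>W \<pi>W X0 Y0 \<sigma>.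
        bottleneck_interleaving \<Lambda> \<epsilon> V W X M \<iota>V \<pi>V Y N \<iota>W \<pi>W X0 Y0 \<sigma>)}"

definition dB :: "(real \<Rightarrow> 'p::order \<Rightarrow> 'p) \<Rightarrow> 'i set \<Rightarrow> ('i \<Rightarrow> 'p set) \<Rightarrow> 'j set \<Rightarrow> ('j \<Rightarrow> 'p set)
     \<Rightarrow> 'k::field itself \<Rightarrow> ereal" where
  "dB \<Lambda> X I Y J k = Inf {ereal \<epsilon> | \<epsilon>. \<epsilon> \<ge> 0 \<and> (\<exists>X0 Y0 \<sigma>. Lmatching \<Lambda> \<epsilon> X I Y J X0 Y0 \<sigma> k)}"

end

theory Submission
  imports Defs "HOL-Library.Countable_Set"
begin

text \<open>For matched intervals \<open>I\<close> and \<open>J\<close>, take the morphisms \<open>k\<^sub>I \<rightarrow> k\<^sub>J(\<epsilon>)\<close> and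
  \<open>k\<^sub>J \<rightarrow> k\<^sub>I(\<epsilon>)\<close> that are the identity wherever source and target are both \<open>k\<close>. For convex
  \<open>I\<close> and \<open>J\<close>, the conditions \<open>I \<subseteq> Ex(J)\<close> and \<open>J \<subseteq> Ex(I)\<close> are exactly what makes these maps
  natural and their composites equal to the \<open>2\<epsilon>\<close>-translations, so they form an interleaving.
  Interval modules are indecomposable: their stalks have dimension at most one, so the support of
  a direct summand is open and closed in the connected set \<open>I\<close>. Hence the interval summands are
  the indecomposable summands, and a matching is a bottleneck interleaving; indexing the summands
  by \<open>P \<times> \<nat>\<close> makes it admissible in the infimum defining \<open>d\<^sub>B\<^sub>I\<close>.\<close>

definition canonical_mat :: "'p set \<Rightarrow> 'p set \<Rightarrow> 'p \<Rightarrow> 'p \<Rightarrow> 'k::field mat" where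
  "canonical_mat A B p q =
     (if p \<in> A \<and> q \<in> B then 1\<^sub>m 1 else 0\<^sub>m (if q \<in> B then 1 else 0) (if p \<in> A then 1 else 0))"

lemma canonical_mat_carrier:
  "canonical_mat A B p q \<in> carrier_mat (if q \<in> B then 1 else 0) (if p \<in> A then 1 else 0)"
  by (simp add: canonical_mat_def)

lemma canonical_mat_mult:
  "(canonical_mat B C q r :: 'k::field mat) * canonical_mat A B p q =
     (if p \<in> A \<and> q \<in> B \<and> r \<in> C then 1\<^sub>m 1
      else 0\<^sub>m (if r \<in> C then 1 else 0) (if p \<in> A then 1 else 0))"
  unfolding canonical_mat_def by (auto intro!: eq_matI simp: scalar_prod_def)

lemma pdim_kI: "pdim (kI I) p = (if p \<in> I then 1 else 0)"
  by (simp add: kI_def)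

lemma pmap_kI: "pmap (kI I) p q = canonical_mat I I p q"
  by (simp add: kI_def canonical_mat_def)

lemma mult_mat_index_inner_dim_1:
  assumes "A \<in> carrier_mat n 1" "B \<in> carrier_mat 1 m" "i < n" "j < m"
  shows "(A * B) $$ (i, j) = A $$ (i, 0) * B $$ (0, j)"
  using assms by (simp add: scalar_prod_def)

lemma mult_mat_index_inner_dim_0:
  assumes "A \<in> carrier_mat n 0" "B \<in> carrier_mat 0 m" "i < n" "j < m"
  shows "(A * B) $$ (i, j) = (0 :: 'a::field)"
  using assms by (simp add: scalar_prod_def)

lemma dim_le_of_one_mat_factor:
  fixes A B :: "'a::field mat"
  assumes A: "A \<in> carrier_mat n m" and B: "B \<in> carrier_mat m n" and AB: "A * B = 1\<^sub>m n"
    and m: "m \<le> 1"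
  shows "n \<le> m"
proof (rule ccontr)
  assume "\<not> n \<le> m"
  show False
  proof (cases "m = 0")
    case True
    then have "(A * B) $$ (0, 0) = 0"
      using mult_mat_index_inner_dim_0[of A n B n 0 0] A B \<open>\<not> n \<le> m\<close> by auto
    then show False using AB \<open>\<not> n \<le> m\<close> by auto
  next
    case False
    then have m1: "m = 1" using m by auto
    have n2: "1 < n" using \<open>\<not> n \<le> m\<close> m1 by auto
    have entry: "A $$ (i, 0) * B $$ (0, j) = (if i = j then 1 else 0)" if "i < n" "j < n" for i j
      using mult_mat_index_inner_dim_1[of A n B n] A B AB m1 that by (metis index_one_mat(1))
    have "A $$ (0, 0) * B $$ (0, 0) = 1" "A $$ (1, 0) * B $$ (0, 1) = 1" "A $$ (0, 0) * B $$ (0, 1) = 0"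
      using entry[of 0 0] entry[of 1 1] entry[of 0 1] n2 by auto
    then show False by (metis mult_eq_0_iff zero_neq_one)
  qed
qed

definition order_convex :: "'p::order set \<Rightarrow> bool" where
  "order_convex A \<longleftrightarrow> (\<forall>p\<in>A. \<forall>q\<in>A. \<forall>r. p \<le> r \<and> r \<le> q \<longrightarrow> r \<in> A)"

lemma order_convexD: "order_convex A \<Longrightarrow> p \<in> A \<Longrightarrow> q \<in> A \<Longrightarrow> p \<le> r \<Longrightarrow> r \<le> q \<Longrightarrow> r \<in> A"
  unfolding order_convex_def by blast

lemma is_intervalD:
  assumes "is_interval I"
  shows "I \<noteq> {}" and "order_convex I"
    and "p \<in> I \<Longrightarrow> q \<in> I \<Longrightarrow> (\<lambda>x y. x \<in> I \<and> y \<in> I \<and> (x \<le> y \<or> y \<le> x))\<^sup>*\<^sup>* p q"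
  using assms unfolding is_interval_def order_convex_def Ball_def by blast+

lemma is_pmod_kI:
  assumes "order_convex I"
  shows "is_pmod (kI I :: ('p::order, 'k::field) pmod)"
  unfolding is_pmod_def pmap_kI pdim_kI
proof (intro conjI allI impI)
  fix p q r :: 'p
  assume "p \<le> q \<and> q \<le> r"
  then show "canonical_mat I I q r * canonical_mat I I p q = (canonical_mat I I p r :: 'k mat)"
    using order_convexD[OF assms, of p r q] unfolding canonical_mat_mult
    by (auto simp: canonical_mat_def)
qed (auto simp: canonical_mat_def intro!: eq_matI)

lemma R_actionD:
  assumes "R_action \<Lambda>" "\<epsilon> \<ge> 0"
  shows "surj (\<Lambda> \<epsilon>)" and "\<Lambda> \<epsilon> p \<le> \<Lambda> \<epsilon> q \<longleftrightarrow> p \<le> q" and "\<Lambda> (2 * \<epsilon>) p = \<Lambda> \<epsilon> (\<Lambda> \<epsilon> p)"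
proof -
  show "surj (\<Lambda> \<epsilon>)" "\<Lambda> \<epsilon> p \<le> \<Lambda> \<epsilon> q \<longleftrightarrow> p \<le> q"
    using assms bij_is_surj unfolding R_action_def by blast+
  have "\<Lambda> \<epsilon> \<circ> \<Lambda> \<epsilon> = \<Lambda> (\<epsilon> + \<epsilon>)" using assms unfolding R_action_def by blast
  then show "\<Lambda> (2 * \<epsilon>) p = \<Lambda> \<epsilon> (\<Lambda> \<epsilon> p)" by (metis comp_apply mult_2)
qed

lemma Ex_setD:
  assumes "R_action \<Lambda>" "\<epsilon> \<ge> 0" "A \<noteq> {}" "p \<in> Ex_set \<Lambda> \<epsilon> A"
  shows "\<exists>a. \<Lambda> \<epsilon> a \<in> A \<and> a \<le> p" and "\<exists>b\<in>A. p \<le> \<Lambda> \<epsilon> b"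
proof -
  have "\<Lambda> \<epsilon> -` A \<noteq> {}"
    using assms(3) R_actionD(1)[OF assms(1,2)] by (metis empty_iff ex_in_conv surjD vimage_eq)
  then show "\<exists>a. \<Lambda> \<epsilon> a \<in> A \<and> a \<le> p" using assms(4) unfolding Ex_set_def upset_def by auto
  show "\<exists>b\<in>A. p \<le> \<Lambda> \<epsilon> b" using assms(3,4) unfolding Ex_set_def downset_def by auto
qed

lemma shift_square_iff:
  assumes R: "R_action \<Lambda>" and e: "\<epsilon> \<ge> 0"
    and cI: "order_convex I" and cJ: "order_convex J" and neI: "I \<noteq> {}" and neJ: "J \<noteq> {}"
    and IJ: "I \<subseteq> Ex_set \<Lambda> \<epsilon> J" and JI: "J \<subseteq> Ex_set \<Lambda> \<epsilon> I" and pq: "p \<le> q"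
  shows "p \<in> I \<and> \<Lambda> \<epsilon> p \<in> J \<and> \<Lambda> \<epsilon> q \<in> J \<longleftrightarrow> p \<in> I \<and> q \<in> I \<and> \<Lambda> \<epsilon> q \<in> J"
proof
  assume h: "p \<in> I \<and> \<Lambda> \<epsilon> p \<in> J \<and> \<Lambda> \<epsilon> q \<in> J"
  then obtain a where "a \<in> I" "\<Lambda> \<epsilon> q \<le> \<Lambda> \<epsilon> a" using Ex_setD(2)[OF R e neI] JI by blast
  then have "q \<le> a" using R_actionD(2)[OF R e] by blast
  then show "p \<in> I \<and> q \<in> I \<and> \<Lambda> \<epsilon> q \<in> J" using h pq \<open>a \<in> I\<close> order_convexD[OF cI] by blast
next
  assume h: "p \<in> I \<and> q \<in> I \<and> \<Lambda> \<epsilon> q \<in> J"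
  then obtain b where b: "\<Lambda> \<epsilon> b \<in> J" "b \<le> p" using Ex_setD(1)[OF R e neJ] IJ by blast
  have "\<Lambda> \<epsilon> b \<le> \<Lambda> \<epsilon> p" "\<Lambda> \<epsilon> p \<le> \<Lambda> \<epsilon> q" using b(2) pq R_actionD(2)[OF R e] by blast+
  then show "p \<in> I \<and> \<Lambda> \<epsilon> p \<in> J \<and> \<Lambda> \<epsilon> q \<in> J" using h b(1) order_convexD[OF cJ] by blast
qed

lemma shift_composite_iff:
  assumes R: "R_action \<Lambda>" and e: "\<epsilon> \<ge> 0" and cJ: "order_convex J" and neJ: "J \<noteq> {}"
    and IJ: "I \<subseteq> Ex_set \<Lambda> \<epsilon> J"
  shows "p \<in> I \<and> \<Lambda> \<epsilon> p \<in> J \<and> \<Lambda> \<epsilon> (\<Lambda> \<epsilon> p) \<in> I \<longleftrightarrow> p \<in> I \<and> \<Lambda> \<epsilon> (\<Lambda> \<epsilon> p) \<in> I"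
proof -
  have "\<Lambda> \<epsilon> p \<in> J" if h: "p \<in> I" "\<Lambda> \<epsilon> (\<Lambda> \<epsilon> p) \<in> I"
  proof -
    obtain b where b: "\<Lambda> \<epsilon> b \<in> J" "b \<le> p" using Ex_setD(1)[OF R e neJ] IJ h(1) by blast
    obtain c where c: "c \<in> J" "\<Lambda> \<epsilon> (\<Lambda> \<epsilon> p) \<le> \<Lambda> \<epsilon> c" using Ex_setD(2)[OF R e neJ] IJ h(2) by blast
    have "\<Lambda> \<epsilon> b \<le> \<Lambda> \<epsilon> p" "\<Lambda> \<epsilon> p \<le> c" using b(2) c(2) R_actionD(2)[OF R e] by blast+
    then show ?thesis using b(1) c(1) order_convexD[OF cJ] by blast
  qed
  then show ?thesis by blast
qed

lemma is_morph_canonical_shift: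
  fixes \<Lambda> :: "real \<Rightarrow> 'p::order \<Rightarrow> 'p"
  assumes "R_action \<Lambda>" "\<epsilon> \<ge> 0" "order_convex I" "order_convex J" "I \<noteq> {}" "J \<noteq> {}"
    "I \<subseteq> Ex_set \<Lambda> \<epsilon> J" "J \<subseteq> Ex_set \<Lambda> \<epsilon> I"
  shows "is_morph (kI I) (shift \<Lambda> \<epsilon> (kI J))
           (\<lambda>p. canonical_mat I J p (\<Lambda> \<epsilon> p) :: 'k::field mat)"
  unfolding is_morph_def
proof (intro conjI allI impI)
  fix p q :: 'p
  assume "p \<le> q"
  then show "pmap (shift \<Lambda> \<epsilon> (kI J)) p q * canonical_mat I J p (\<Lambda> \<epsilon> p) =
      (canonical_mat I J q (\<Lambda> \<epsilon> q) :: 'k mat) * pmap (kI I) p q"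
    using shift_square_iff[OF assms] by (simp add: shift_def pmap_kI canonical_mat_mult)
qed (simp add: shift_def pdim_kI canonical_mat_carrier)

lemma canonical_shift_composite:
  assumes R: "R_action \<Lambda>" and e: "\<epsilon> \<ge> 0" and "order_convex J" "J \<noteq> {}" "I \<subseteq> Ex_set \<Lambda> \<epsilon> J"
  shows "(canonical_mat J I (\<Lambda> \<epsilon> p) (\<Lambda> \<epsilon> (\<Lambda> \<epsilon> p)) :: 'k::field mat) * canonical_mat I J p (\<Lambda> \<epsilon> p)
           = transl \<Lambda> (2 * \<epsilon>) (kI I) p"
  using shift_composite_iff[OF assms, of p]
  by (simp add: transl_def R_actionD(3)[OF R e] pmap_kI canonical_mat_mult) (simp add: canonical_mat_def)

lemma kI_interleaved:
  assumes R: "R_action \<Lambda>" and e: "\<epsilon> \<ge> 0"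
    and cI: "order_convex I" and cJ: "order_convex J" and neI: "I \<noteq> {}" and neJ: "J \<noteq> {}"
    and IJ: "I \<subseteq> Ex_set \<Lambda> \<epsilon> J" and JI: "J \<subseteq> Ex_set \<Lambda> \<epsilon> I"
  shows "interleaved \<Lambda> \<epsilon> (kI I :: ('p::order, 'k::field) pmod) (kI J)"
proof -
  define \<alpha> :: "'p \<Rightarrow> 'k mat" where "\<alpha> p = canonical_mat I J p (\<Lambda> \<epsilon> p)" for p
  define \<beta> :: "'p \<Rightarrow> 'k mat" where "\<beta> p = canonical_mat J I p (\<Lambda> \<epsilon> p)" for p
  have "is_morph (kI I) (shift \<Lambda> \<epsilon> (kI J)) \<alpha>" "is_morph (kI J) (shift \<Lambda> \<epsilon> (kI I)) \<beta>"
    unfolding \<alpha>_def \<beta>_def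
    by (intro is_morph_canonical_shift[OF R e] assms)+
  moreover have "\<beta> (\<Lambda> \<epsilon> p) * \<alpha> p = transl \<Lambda> (2 * \<epsilon>) (kI I) p"
    and "\<alpha> (\<Lambda> \<epsilon> p) * \<beta> p = transl \<Lambda> (2 * \<epsilon>) (kI J) p" for p
    unfolding \<alpha>_def \<beta>_def
    by (intro canonical_shift_composite[OF R e] assms)+
  ultimately show ?thesis unfolding interleaved_def by blast
qed

lemma is_decomp_summandD:
  assumes "is_decomp V X M \<iota> \<pi>" "x \<in> X"
  shows "is_pmod (M x)" and "is_morph (M x) V (\<iota> x)" and "is_morph V (M x) (\<pi> x)"
  using assms unfolding is_decomp_def by blast+

lemma is_decomp_orthogonal:
  assumes "is_decomp V X M \<iota> \<pi>" "x \<in> X" "y \<in> X"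
  shows "\<pi> x p * \<iota> y p = (if x = y then 1\<^sub>m (pdim (M x) p) else 0\<^sub>m (pdim (M x) p) (pdim (M y) p))"
  using assms unfolding is_decomp_def by blast

lemma kI_summand_carrier:
  assumes "is_decomp (kI I) X N \<iota> \<pi>" "b \<in> X"
  shows "\<iota> b p \<in> carrier_mat (if p \<in> I then 1 else 0) (pdim (N b) p)"
    and "\<pi> b p \<in> carrier_mat (pdim (N b) p) (if p \<in> I then 1 else 0)"
  using is_decomp_summandD[OF assms] unfolding is_morph_def pdim_kI by blast+

lemma kI_summand_pdim:
  assumes d: "is_decomp (kI I) X N \<iota> \<pi>" and b: "b \<in> X" and nz: "pdim (N b) p \<noteq> 0"
  shows "p \<in> I" and "pdim (N b) p = 1"
proof -
  have "\<pi> b p * \<iota> b p = 1\<^sub>m (pdim (N b) p)" using is_decomp_orthogonal[OF d b b] by simp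
  then have "pdim (N b) p \<le> (if p \<in> I then 1 else 0)"
    by (rule dim_le_of_one_mat_factor[OF kI_summand_carrier(2,1)[OF d b]]) simp
  then show "p \<in> I" "pdim (N b) p = 1" using nz by (simp_all split: if_splits)
qed

lemma kI_summand_unit_entry:
  assumes d: "is_decomp (kI I) X N \<iota> \<pi>" and b: "b \<in> X" and nz: "pdim (N b) p \<noteq> 0"
  shows "\<pi> b p $$ (0, 0) * \<iota> b p $$ (0, 0) = 1"
proof -
  have p: "p \<in> I" "pdim (N b) p = 1" using kI_summand_pdim[OF assms] by blast+
  have "\<pi> b p \<in> carrier_mat 1 1" "\<iota> b p \<in> carrier_mat 1 1"
    using kI_summand_carrier[OF d b, of p] p by simp_all
  moreover have "(\<pi> b p * \<iota> b p) $$ (0, 0) = 1" using is_decomp_orthogonal[OF d b b, of p] p by simp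
  ultimately show ?thesis using mult_mat_index_inner_dim_1[of "\<pi> b p" 1 "\<iota> b p" 1 0 0] by simp
qed

lemma kI_summand_support_comparable:
  assumes d: "is_decomp (kI I) X N \<iota> \<pi>" and b: "b \<in> X"
    and pI: "p \<in> I" and qI: "q \<in> I" and pq: "p \<le> q"
  shows "pdim (N b) p \<noteq> 0 \<longleftrightarrow> pdim (N b) q \<noteq> 0"
proof -
  have \<iota>: "is_morph (N b) (kI I) (\<iota> b)" and \<pi>: "is_morph (kI I) (N b) (\<pi> b)" and "is_pmod (N b)"
    using is_decomp_summandD[OF d b] by blast+
  then have N_pq: "pmap (N b) p q \<in> carrier_mat (pdim (N b) q) (pdim (N b) p)"
    using pq unfolding is_pmod_def by blast
  have kI_pq: "pmap (kI I) p q = 1\<^sub>m 1" using pI qI by (simp add: pmap_kI canonical_mat_def)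
  have carrier: "\<iota> b r \<in> carrier_mat 1 (pdim (N b) r)" "\<pi> b r \<in> carrier_mat (pdim (N b) r) 1"
    if "r \<in> I" for r
    using kI_summand_carrier[OF d b, of r] that by simp_all
  have nat_\<iota>: "\<iota> b p = \<iota> b q * pmap (N b) p q"
    using \<iota> pq carrier(1)[OF pI] kI_pq unfolding is_morph_def by (metis left_mult_one_mat)
  have nat_\<pi>: "\<pi> b q = pmap (N b) p q * \<pi> b p"
    using \<pi> pq carrier(2)[OF qI] kI_pq unfolding is_morph_def by (metis right_mult_one_mat)
  show ?thesis
  proof
    assume p_nz: "pdim (N b) p \<noteq> 0"
    show "pdim (N b) q \<noteq> 0"
    proof
      assume "pdim (N b) q = 0"
      then have "\<iota> b p $$ (0, 0) = 0"
        using nat_\<iota> carrier(1)[OF qI] N_pq p_nz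
          mult_mat_index_inner_dim_0[of "\<iota> b q" 1 "pmap (N b) p q" "pdim (N b) p" 0 0] by simp
      then show False using kI_summand_unit_entry[OF d b p_nz] by simp
    qed
  next
    assume q_nz: "pdim (N b) q \<noteq> 0"
    show "pdim (N b) p \<noteq> 0"
    proof
      assume "pdim (N b) p = 0"
      then have "\<pi> b q $$ (0, 0) = 0"
        using nat_\<pi> carrier(2)[OF pI] N_pq q_nz
          mult_mat_index_inner_dim_0[of "pmap (N b) p q" "pdim (N b) q" "\<pi> b p" 1 0 0] by simp
      then show False using kI_summand_unit_entry[OF d b q_nz] by simp
    qed
  qed
qed

lemma kI_summand_support_connected:
  assumes d: "is_decomp (kI I) X N \<iota> \<pi>" and b: "b \<in> X"
    and iI: "is_interval I" and pI: "p \<in> I" and qI: "q \<in> I"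
  shows "pdim (N b) p \<noteq> 0 \<longleftrightarrow> pdim (N b) q \<noteq> 0"
  using is_intervalD(3)[OF iI pI qI]
proof (induction rule: rtranclp_induct)
  case base
  then show ?case by simp
next
  case (step y z)
  then show ?case
    using kI_summand_support_comparable[OF d b, of y z] kI_summand_support_comparable[OF d b, of z y]
    by blast
qed

lemma kI_indecomposable:
  assumes iI: "is_interval I"
  shows "indecomposable (kI I :: ('p::order, 'k::field) pmod)"
  unfolding indecomposable_def
proof (intro conjI notI)
  show "is_pmod (kI I :: ('p, 'k) pmod)" using is_pmod_kI is_intervalD(2)[OF iI] by blast
  show "nonzero_pmod (kI I :: ('p, 'k) pmod)"
    using is_intervalD(1)[OF iI] by (auto simp: nonzero_pmod_def pdim_kI)
next
  assume "\<exists>(N :: bool \<Rightarrow> ('p, 'k) pmod) \<iota> \<pi>. is_decomp (kI I) UNIV N \<iota> \<pi> \<and> (\<forall>b. nonzero_pmod (N b))"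
  then obtain N :: "bool \<Rightarrow> ('p, 'k) pmod" and \<iota> \<pi>
    where d: "is_decomp (kI I) UNIV N \<iota> \<pi>" and nz: "\<forall>b. nonzero_pmod (N b)" by blast
  obtain p q where p: "pdim (N True) p \<noteq> 0" and q: "pdim (N False) q \<noteq> 0"
    using nz unfolding nonzero_pmod_def by blast
  have "p \<in> I" "q \<in> I" using kI_summand_pdim(1)[OF d UNIV_I] p q by blast+
  then have p': "pdim (N False) p \<noteq> 0" using kI_summand_support_connected[OF d UNIV_I iI] q by blast
  have "\<pi> True p \<in> carrier_mat 1 1" "\<iota> False p \<in> carrier_mat 1 1"
    using kI_summand_carrier(2)[OF d, where b = True and p = p]
      kI_summand_carrier(1)[OF d, where b = False and p = p]
      kI_summand_pdim[OF d UNIV_I p] kI_summand_pdim[OF d UNIV_I p'] by simp_all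
  moreover have "(\<pi> True p * \<iota> False p) $$ (0, 0) = 0"
    using is_decomp_orthogonal[OF d, where x = True and y = False and p = p] p p' by simp
  ultimately have "\<pi> True p $$ (0, 0) * \<iota> False p $$ (0, 0) = 0"
    using mult_mat_index_inner_dim_1[of "\<pi> True p" 1 "\<iota> False p" 1 0 0] by simp
  moreover have "\<pi> True p $$ (0, 0) \<noteq> 0" "\<iota> False p $$ (0, 0) \<noteq> 0"
    using kI_summand_unit_entry[OF d UNIV_I p] kI_summand_unit_entry[OF d UNIV_I p'] by auto
  ultimately show False by simp
qed

lemma is_decomp_reindex:
  assumes d: "is_decomp V X M \<iota> \<pi>" and f: "bij_betw f X' X"
  shows "is_decomp V X' (\<lambda>x. M (f x)) (\<lambda>x. \<iota> (f x)) (\<lambda>x. \<pi> (f x))"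
proof -
  from d have summands: "\<forall>x\<in>X. is_pmod (M x) \<and> is_morph (M x) V (\<iota> x) \<and> is_morph V (M x) (\<pi> x)"
    and orth: "\<forall>x\<in>X. \<forall>y\<in>X. \<forall>p. \<pi> x p * \<iota> y p =
        (if x = y then 1\<^sub>m (pdim (M x) p) else 0\<^sub>m (pdim (M x) p) (pdim (M y) p))"
    and fin: "\<forall>p. finite {x\<in>X. pdim (M x) p \<noteq> 0}"
    and sum: "\<forall>p. \<forall>i < pdim V p. \<forall>j < pdim V p.
        (\<Sum>x\<in>{x\<in>X. pdim (M x) p \<noteq> 0}. (\<iota> x p * \<pi> x p) $$ (i, j)) = 1\<^sub>m (pdim V p) $$ (i, j)"
    unfolding is_decomp_def by blast+
  have fX: "f x \<in> X" if "x \<in> X'" for x using bij_betw_apply[OF f that] .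
  have f_eq: "f x = f y \<longleftrightarrow> x = y" if "x \<in> X'" "y \<in> X'" for x y
    using bij_betw_imp_inj_on[OF f] that by (auto dest: inj_onD)
  have supp: "bij_betw f {x\<in>X'. pdim (M (f x)) p \<noteq> 0} {x\<in>X. pdim (M x) p \<noteq> 0}" for p
    by (rule bij_betw_Collect[OF f]) simp
  have "finite {x\<in>X'. pdim (M (f x)) p \<noteq> 0} \<and> (\<forall>i < pdim V p. \<forall>j < pdim V p.
      (\<Sum>x\<in>{x\<in>X'. pdim (M (f x)) p \<noteq> 0}. (\<iota> (f x) p * \<pi> (f x) p) $$ (i, j)) = 1\<^sub>m (pdim V p) $$ (i, j))"
    for p
  proof (intro conjI allI impI)
    show "finite {x\<in>X'. pdim (M (f x)) p \<noteq> 0}" using fin bij_betw_finite[OF supp] by blast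
    fix i j assume "i < pdim V p" "j < pdim V p"
    have "(\<Sum>x\<in>{x\<in>X'. pdim (M (f x)) p \<noteq> 0}. (\<iota> (f x) p * \<pi> (f x) p) $$ (i, j)) =
        (\<Sum>x\<in>{x\<in>X. pdim (M x) p \<noteq> 0}. (\<iota> x p * \<pi> x p) $$ (i, j))"
      by (rule sum.reindex_bij_betw[OF supp, where g = "\<lambda>x. (\<iota> x p * \<pi> x p) $$ (i, j)"])
    also have "\<dots> = 1\<^sub>m (pdim V p) $$ (i, j)" using sum \<open>i < pdim V p\<close> \<open>j < pdim V p\<close> by blast
    finally show "(\<Sum>x\<in>{x\<in>X'. pdim (M (f x)) p \<noteq> 0}. (\<iota> (f x) p * \<pi> (f x) p) $$ (i, j)) =
        1\<^sub>m (pdim V p) $$ (i, j)" .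
  qed
  moreover have "\<forall>x\<in>X'. \<forall>y\<in>X'. \<forall>p. \<pi> (f x) p * \<iota> (f y) p =
      (if x = y then 1\<^sub>m (pdim (M (f x)) p) else 0\<^sub>m (pdim (M (f x)) p) (pdim (M (f y)) p))"
    using orth fX f_eq by auto
  ultimately show ?thesis using summands fX unfolding is_decomp_def by blast
qed

lemma indec_decomp_reindex:
  assumes "indec_decomp V X M \<iota> \<pi>" "bij_betw f X' X"
  shows "indec_decomp V X' (\<lambda>x. M (f x)) (\<lambda>x. \<iota> (f x)) (\<lambda>x. \<pi> (f x))"
proof -
  from assms(1) have d: "is_decomp V X M \<iota> \<pi>" and indec: "\<forall>x\<in>X. indecomposable (M x)"
    unfolding indec_decomp_def by blast+
  show ?thesis
    unfolding indec_decomp_def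
  proof
    show "is_decomp V X' (\<lambda>x. M (f x)) (\<lambda>x. \<iota> (f x)) (\<lambda>x. \<pi> (f x))"
      by (rule is_decomp_reindex[OF d assms(2)])
    show "\<forall>x\<in>X'. indecomposable (M (f x))" using indec bij_betw_apply[OF assms(2)] by blast
  qed
qed

lemma bij_betw_inj_conjugate:
  assumes f: "inj_on f X" and h: "inj_on h Y" and sub: "X0 \<subseteq> X" "Y0 \<subseteq> Y"
    and \<sigma>: "bij_betw \<sigma> X0 Y0"
  shows "bij_betw (\<lambda>x. h (\<sigma> (inv_into X f x))) (f ` X0) (h ` Y0)"
proof -
  have f_inv_bij: "bij_betw (inv_into X f) (f ` X0) X0"
    by (rule bij_betw_subset[OF bij_betw_inv_into[OF inj_on_imp_bij_betw[OF f]]])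
      (use sub(1) f in auto)
  have h_bij: "bij_betw h Y0 (h ` Y0)" by (rule inj_on_imp_bij_betw[OF inj_on_subset[OF h sub(2)]])
  have "bij_betw (h \<circ> (\<sigma> \<circ> inv_into X f)) (f ` X0) (h ` Y0)"
    by (rule bij_betw_trans[OF bij_betw_trans[OF f_inv_bij \<sigma>] h_bij])
  then show ?thesis by (simp add: comp_def)
qed

lemma bottleneck_interleaving_reindex:
  assumes bi: "bottleneck_interleaving \<Lambda> \<epsilon> V W X M \<iota>V \<pi>V Y N \<iota>W \<pi>W X0 Y0 \<sigma>"
    and f: "inj_on f X" and h: "inj_on h Y"
  shows "bottleneck_interleaving \<Lambda> \<epsilon> V W
     (f ` X) (\<lambda>x. M (inv_into X f x)) (\<lambda>x. \<iota>V (inv_into X f x)) (\<lambda>x. \<pi>V (inv_into X f x))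
     (h ` Y) (\<lambda>y. N (inv_into Y h y)) (\<lambda>y. \<iota>W (inv_into Y h y)) (\<lambda>y. \<pi>W (inv_into Y h y))
     (f ` X0) (h ` Y0) (\<lambda>x. h (\<sigma> (inv_into X f x)))"
proof -
  from bi have dV: "indec_decomp V X M \<iota>V \<pi>V" and dW: "indec_decomp W Y N \<iota>W \<pi>W"
    and sub: "X0 \<subseteq> X" "Y0 \<subseteq> Y" and \<sigma>: "bij_betw \<sigma> X0 Y0"
    and trivX: "\<forall>x\<in>X - X0. trivial \<Lambda> (2 * \<epsilon>) (M x)"
    and trivY: "\<forall>y\<in>Y - Y0. trivial \<Lambda> (2 * \<epsilon>) (N y)"
    and il: "\<forall>x\<in>X0. interleaved \<Lambda> \<epsilon> (M x) (N (\<sigma> x))"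
    unfolding bottleneck_interleaving_def by blast+
  have f_inv: "inv_into X f (f x) = x" if "x \<in> X" for x using f that by (rule inv_into_f_f)
  have h_inv: "inv_into Y h (h y) = y" if "y \<in> Y" for y using h that by (rule inv_into_f_f)
  have "\<forall>x\<in>f ` X0. interleaved \<Lambda> \<epsilon> (M (inv_into X f x)) (N (inv_into Y h (h (\<sigma> (inv_into X f x)))))"
  proof
    fix x assume "x \<in> f ` X0"
    then obtain x0 where x0: "x0 \<in> X0" "x = f x0" by blast
    have "\<sigma> x0 \<in> Y" using bij_betw_apply[OF \<sigma> x0(1)] sub(2) by blast
    then show "interleaved \<Lambda> \<epsilon> (M (inv_into X f x)) (N (inv_into Y h (h (\<sigma> (inv_into X f x)))))"
      using il x0 sub(1) f_inv h_inv by auto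
  qed
  moreover have "\<forall>x\<in>f ` X - f ` X0. trivial \<Lambda> (2 * \<epsilon>) (M (inv_into X f x))"
    using trivX f_inv by auto
  moreover have "\<forall>y\<in>h ` Y - h ` Y0. trivial \<Lambda> (2 * \<epsilon>) (N (inv_into Y h y))"
    using trivY h_inv by auto
  ultimately show ?thesis
    unfolding bottleneck_interleaving_def
    using indec_decomp_reindex[OF dV bij_betw_inv_into[OF inj_on_imp_bij_betw[OF f]]]
      indec_decomp_reindex[OF dW bij_betw_inv_into[OF inj_on_imp_bij_betw[OF h]]]
      bij_betw_inj_conjugate[OF f h sub \<sigma>] sub
    by blast
qed

lemma exists_inj_on_point_nat:
  fixes A :: "'i \<Rightarrow> 'p set"
  assumes ne: "\<And>x. x \<in> X \<Longrightarrow> A x \<noteq> {}" and fin: "\<And>p. finite {x\<in>X. p \<in> A x}"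
  shows "\<exists>f :: 'i \<Rightarrow> 'p \<times> nat. inj_on f X"
proof -
  define pt where "pt x = (SOME p. p \<in> A x)" for x
  have pt: "pt x \<in> A x" if "x \<in> X" for x using ne[OF that] unfolding pt_def by (simp add: some_in_eq)
  define f where "f x = (pt x, to_nat_on {y\<in>X. pt x \<in> A y} x)" for x
  have "inj_on f X"
  proof (rule inj_onI)
    fix x y assume xy: "x \<in> X" "y \<in> X" "f x = f y"
    then have same_pt: "pt x = pt y" unfolding f_def by simp
    have "x \<in> {z\<in>X. pt x \<in> A z}" "y \<in> {z\<in>X. pt x \<in> A z}" using pt[OF xy(1)] pt[OF xy(2)] xy(1,2) same_pt by auto
    moreover have "countable {z\<in>X. pt x \<in> A z}" using fin countable_finite by blast
    ultimately show "x = y" using xy(3) same_pt unfolding f_def by auto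
  qed
  then show ?thesis by blast
qed

lemma interval_decomp_imp_indec_decomp:
  assumes "interval_decomp V X I \<iota> \<pi>"
  shows "indec_decomp V X (\<lambda>x. kI (I x)) \<iota> \<pi>"
  using assms kI_indecomposable unfolding interval_decomp_def indec_decomp_def by blast

lemma interval_decomp_point_finite:
  assumes "interval_decomp (V :: ('p::order, 'k::field) pmod) X I \<iota> \<pi>"
  shows "finite {x\<in>X. p \<in> I x}"
proof -
  have "finite {x\<in>X. pdim (kI (I x) :: ('p, 'k) pmod) p \<noteq> 0}"
    using assms unfolding interval_decomp_def is_decomp_def by blast
  moreover have "{x\<in>X. pdim (kI (I x) :: ('p, 'k) pmod) p \<noteq> 0} = {x\<in>X. p \<in> I x}"
    by (auto simp: pdim_kI)
  ultimately show ?thesis by simp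
qed

lemma Lmatching_imp_bottleneck_interleaving:
  fixes V W :: "('p::order, 'k::field) pmod"
  assumes R: "R_action \<Lambda>" and dV: "interval_decomp V X I \<iota>V \<pi>V" and dW: "interval_decomp W Y J \<iota>W \<pi>W"
    and e: "\<epsilon> \<ge> 0" and L: "Lmatching \<Lambda> \<epsilon> X I Y J X0 Y0 \<sigma> TYPE('k)"
  shows "bottleneck_interleaving \<Lambda> \<epsilon> V W X (\<lambda>x. kI (I x)) \<iota>V \<pi>V Y (\<lambda>y. kI (J y)) \<iota>W \<pi>W X0 Y0 \<sigma>"
proof -
  from L have sub: "X0 \<subseteq> X" "Y0 \<subseteq> Y" and \<sigma>: "bij_betw \<sigma> X0 Y0"
    and triv: "\<forall>x\<in>X - X0. trivial \<Lambda> (2 * \<epsilon>) (kI (I x) :: ('p, 'k) pmod)"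
      "\<forall>y\<in>Y - Y0. trivial \<Lambda> (2 * \<epsilon>) (kI (J y) :: ('p, 'k) pmod)"
    and Ex: "\<forall>x\<in>X0. I x \<subseteq> Ex_set \<Lambda> \<epsilon> (J (\<sigma> x)) \<and> J (\<sigma> x) \<subseteq> Ex_set \<Lambda> \<epsilon> (I x)"
    unfolding Lmatching_def by blast+
  have "interleaved \<Lambda> \<epsilon> (kI (I x) :: ('p, 'k) pmod) (kI (J (\<sigma> x)))" if x: "x \<in> X0" for x
  proof -
    have iI: "is_interval (I x)" using dV x sub(1) unfolding interval_decomp_def by blast
    have iJ: "is_interval (J (\<sigma> x))"
      using dW bij_betw_apply[OF \<sigma> x] sub(2) unfolding interval_decomp_def by blast
    from Ex x have "I x \<subseteq> Ex_set \<Lambda> \<epsilon> (J (\<sigma> x))" "J (\<sigma> x) \<subseteq> Ex_set \<Lambda> \<epsilon> (I x)" by blast+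
    then show ?thesis
      by (rule kI_interleaved[OF R e is_intervalD(2)[OF iI] is_intervalD(2)[OF iJ]
            is_intervalD(1)[OF iI] is_intervalD(1)[OF iJ]])
  qed
  then show ?thesis
    unfolding bottleneck_interleaving_def
    using interval_decomp_imp_indec_decomp[OF dV] interval_decomp_imp_indec_decomp[OF dW] sub \<sigma> triv
    by blast
qed

lemma dB_admissible_imp_dBI_admissible:
  fixes V W :: "('p::order, 'k::field) pmod" and X :: "'i set" and Y :: "'j set"
  assumes R: "R_action \<Lambda>" and dV: "interval_decomp V X I \<iota>V \<pi>V" and dW: "interval_decomp W Y J \<iota>W \<pi>W"
    and admissible: "\<epsilon> \<ge> 0 \<and> (\<exists>X0 Y0 \<sigma>. Lmatching \<Lambda> \<epsilon> X I Y J X0 Y0 \<sigma> TYPE('k))"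
  shows "\<epsilon> \<ge> 0 \<and> (\<exists>(X' :: ('p \<times> nat) set) M \<iota>V' \<pi>V' (Y' :: ('p \<times> nat) set) N \<iota>W' \<pi>W' X0' Y0' \<sigma>'.
           bottleneck_interleaving \<Lambda> \<epsilon> V W X' M \<iota>V' \<pi>V' Y' N \<iota>W' \<pi>W' X0' Y0' \<sigma>')"
proof -
  from admissible obtain X0 Y0 \<sigma> where e: "\<epsilon> \<ge> 0" and L: "Lmatching \<Lambda> \<epsilon> X I Y J X0 Y0 \<sigma> TYPE('k)"
    by blast
  have neI: "I x \<noteq> {}" if "x \<in> X" for x using dV that is_intervalD(1) unfolding interval_decomp_def by blast
  have neJ: "J y \<noteq> {}" if "y \<in> Y" for y using dW that is_intervalD(1) unfolding interval_decomp_def by blast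
  obtain f :: "'i \<Rightarrow> 'p \<times> nat" where f: "inj_on f X"
    using exists_inj_on_point_nat[OF neI interval_decomp_point_finite[OF dV]] by blast
  obtain h :: "'j \<Rightarrow> 'p \<times> nat" where h: "inj_on h Y"
    using exists_inj_on_point_nat[OF neJ interval_decomp_point_finite[OF dW]] by blast
  from e bottleneck_interleaving_reindex[OF Lmatching_imp_bottleneck_interleaving[OF R dV dW e L] f h]
  show ?thesis by blast
qed

lemma Inf_Collect_image_mono:
  fixes g :: "'a \<Rightarrow> 'b::complete_lattice"
  assumes "\<And>x. P x \<Longrightarrow> Q x"
  shows "Inf {g x | x. Q x} \<le> Inf {g x | x. P x}"
  by (rule Inf_superset_mono) (use assms in blast)

theorem proposition2p18:
  fixes \<Lambda> :: "real \<Rightarrow> 'p::order \<Rightarrow> 'p"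
    and V W :: "('p, 'k::field) pmod"
    and X :: "'i set" and I :: "'i \<Rightarrow> 'p set" and \<iota>V \<pi>V :: "'i \<Rightarrow> 'p \<Rightarrow> 'k mat"
    and Y :: "'j set" and J :: "'j \<Rightarrow> 'p set" and \<iota>W \<pi>W :: "'j \<Rightarrow> 'p \<Rightarrow> 'k mat"
  assumes "R_action \<Lambda>"
    and "is_pmod V" and "is_pmod W"
    and "interval_decomp V X I \<iota>V \<pi>V"
    and "interval_decomp W Y J \<iota>W \<pi>W"
  shows "(\<forall>\<epsilon> X0 Y0 \<sigma>. \<epsilon> \<ge> 0 \<and> Lmatching \<Lambda> \<epsilon> X I Y J X0 Y0 \<sigma> TYPE('k) \<longrightarrow>
            bottleneck_interleaving \<Lambda> \<epsilon> V W X (\<lambda>x. kI (I x)) \<iota>V \<pi>V Y (\<lambda>y. kI (J y)) \<iota>W \<pi>W X0 Y0 \<sigma>)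
       \<and> dBI \<Lambda> V W \<le> dB \<Lambda> X I Y J TYPE('k)"
proof
  show "\<forall>\<epsilon> X0 Y0 \<sigma>. \<epsilon> \<ge> 0 \<and> Lmatching \<Lambda> \<epsilon> X I Y J X0 Y0 \<sigma> TYPE('k) \<longrightarrow>
      bottleneck_interleaving \<Lambda> \<epsilon> V W X (\<lambda>x. kI (I x)) \<iota>V \<pi>V Y (\<lambda>y. kI (J y)) \<iota>W \<pi>W X0 Y0 \<sigma>"
    using Lmatching_imp_bottleneck_interleaving[OF assms(1,4,5)] by blast
  show "dBI \<Lambda> V W \<le> dB \<Lambda> X I Y J TYPE('k)"
    unfolding dBI_def dB_def
    by (rule Inf_Collect_image_mono) (erule dB_admissible_imp_dBI_admissible[OF assms(1,4,5)])
qed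

end
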